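(* Let $\mathcal{T}$ be a planar triangulation, $m\in\mathbb{Z}_{\ge0}$, $r\in\mathbb{Z}_{\ge-1}$, and $\mathbf r$ the smoothness distribution with $\mathbf r(\tau)=r$ on interior edges, such that $\mathcal{Q}^{\mathbf r}$ is lower-acyclic. If every interior vertex of $\mathcal{T}$ has at least $r+2$ distinct slopes incident upon it and $m>\frac{3r}{2}$, then for any face $\sigma\in\mathcal{T}_2$, setting the smoothness across every edge of the boundary of $\sigma$ to $-1$ (and keeping $\mathbf r$ on all other interior edges) yields a smoothness distribution $\mathbf s$ for which $\mathcal{Q}^{\mathbf s}$ is lower-acyclic. In particular: (A) if $m\ge2$, $r=1$, and every interior vertex has edges with at least $3$ distinct slopes incident upon it, this holds; (B) if $m\ge4$, $r=2$, and every interior vertex has edges with at least $4$ distinct slopes incident upon it, this holds.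
   Context: $\mathcal{T}$ is a finite planar triangulation of a closed polygonal region $\Omega\subset\mathbb{R}^2$ (possibly not simply connected). An edge or vertex is interior if not contained in $\partial\Omega$; $\mathcal{T}^\circ_1,\mathcal{T}^\circ_0$ denote interior edges and vertices, $\mathcal{T}_2$ the faces. The number of distinct slopes at a vertex is the number of distinct directions among the edges containing it. ${\mathcal{P}}_m$ is the space of real bivariate polynomials of total degree at most $m$; $\langle f\rangle$ is the subspace of ${\mathcal{P}}_m$ of polynomial multiples of $f$ lying in ${\mathcal{P}}_m$. A smoothness distribution is a map $\mathbf{r}:\mathcal{T}^\circ_1\to\mathbb{Z}_{\ge -1}$. For $\tau\in\mathcal{T}^\circ_1$ with vanishing affine-linear form $\ell_\tau$, $\mathfrak{J}^{\mathbf r}_\tau=\langle \ell_\tau^{\mathbf r(\tau)+1}\rangle$ (equal to ${\mathcal{P}}_m$ if $\mathbf r(\tau)=-1$); for $\gamma\in\mathcal{T}^\circ_0$, $\mathfrak{J}^{\mathbf r}_\gamma=\sum_{\tau\ni\gamma}\mathfrak{J}^{\mathbf r}_\tau$. $\mathcal{C}$ is the chain complex $\bigoplus_{\sigma\in\mathcal{T}_2}{\mathcal{P}}_m\to\bigoplus_{\tau\in\mathcal{T}^\circ_1}{\mathcal{P}}_m\to\bigoplus_{\gamma\in\mathcal{T}^\circ_0}{\mathcal{P}}_m$ (degrees $2,1,0$) with cellular boundary maps of $\mathcal{T}$ relative to $\partial\Omega$ (signs $\pm1$ from fixed orientations); $\mathcal{I}^{\mathbf r}$ is the subcomplex $0\to\bigoplus_\tau\mathfrak{J}^{\mathbf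 r}_\tau\to\bigoplus_\gamma\mathfrak{J}^{\mathbf r}_\gamma$; $\mathcal{Q}^{\mathbf r}=\mathcal{C}/\mathcal{I}^{\mathbf r}$, with $H_2(\mathcal{Q}^{\mathbf r})$ the space of piecewise polynomials in ${\mathcal{P}}_m$ that are $C^{\mathbf r(\tau)}$ across each interior edge $\tau$. $\mathcal{Q}^{\mathbf r}$ is lower-acyclic if $H_1(\mathcal{Q}^{\mathbf r})=H_0(\mathcal{Q}^{\mathbf r})=0$. *)

theory Defs
  imports "HOL-Analysis.Analysis"
begin

type_synonym pt = "real \<times> real"

definition polys :: "nat \<Rightarrow> (pt \<Rightarrow> real) set" where
  "polys m = {f. \<exists>c :: nat \<Rightarrow> nat \<Rightarrow> real. \<forall>p. f p =
      (\<Sum>i\<le>m. \<Sum>j\<le>m - i. c i j * fst p ^ i * snd p ^ j)}"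

definition is_poly :: "(pt \<Rightarrow> real) \<Rightarrow> bool" where
  "is_poly g \<longleftrightarrow> (\<exists>n. g \<in> polys n)"

definition multiples :: "nat \<Rightarrow> (pt \<Rightarrow> real) \<Rightarrow> (pt \<Rightarrow> real) set" where
  "multiples m f = {h \<in> polys m. \<exists>g. is_poly g \<and> h = (\<lambda>p. f p * g p)}"

definition det2 :: "pt \<Rightarrow> pt \<Rightarrow> real" where
  "det2 u v = fst u * snd v - snd u * fst v"

definition lexless :: "pt \<Rightarrow> pt \<Rightarrow> bool" where
  "lexless a b \<longleftrightarrow> fst a < fst b \<or> (fst a = fst b \<and> snd a < snd b)"

text \<open>A planar planar_triangulation: finite set of nondegenerate triangles (as vertex sets)
  forming a geometric simplicial complex whose union is a connected region.\<close>
definition region :: "pt set set \<Rightarrow> pt set" where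
  "region T = (\<Union>\<sigma>\<in>T. convex hull \<sigma>)"

definition planar_triangulation :: "pt set set \<Rightarrow> bool" where
  "planar_triangulation T \<longleftrightarrow> finite T \<and> T \<noteq> {} \<and>
     (\<forall>\<sigma>\<in>T. \<exists>a b c. \<sigma> = {a, b, c} \<and> det2 (b - a) (c - a) \<noteq> 0) \<and>
     (\<forall>\<sigma>\<in>T. \<forall>\<sigma>'\<in>T. convex hull \<sigma> \<inter> convex hull \<sigma>' = convex hull (\<sigma> \<inter> \<sigma>')) \<and>
     connected (region T)"

definition edges :: "pt set set \<Rightarrow> pt set set" where
  "edges T = {e. \<exists>\<sigma>\<in>T. e \<subseteq> \<sigma> \<and> card e = 2}"

definition verts :: "pt set set \<Rightarrow> pt set" where
  "verts T = \<Union>T"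

definition int_edges :: "pt set set \<Rightarrow> pt set set" where
  "int_edges T = {e \<in> edges T. \<not> (convex hull e \<subseteq> frontier (region T))}"

definition int_verts :: "pt set set \<Rightarrow> pt set" where
  "int_verts T = {v \<in> verts T. v \<notin> frontier (region T)}"

definition slopes :: "pt set set \<Rightarrow> pt \<Rightarrow> pt set set" where
  "slopes T g = (\<lambda>w. span {w - g}) ` {w. w \<noteq> g \<and> {g, w} \<in> edges T}"

text \<open>Orientation of an edge: from lexicographically smaller to larger endpoint.\<close>
definition etail :: "pt set \<Rightarrow> pt" where
  "etail e = (THE u. u \<in> e \<and> (\<forall>v\<in>e. v \<noteq> u \<longrightarrow> lexless u v))"

definition ehead :: "pt set \<Rightarrow> pt" where
  "ehead e = (THE u. u \<in> e \<and> (\<forall>v\<in>e. v \<noteq> u \<longrightarrow> lexless v u))"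

definition lform :: "pt set \<Rightarrow> pt \<Rightarrow> real" where
  "lform e p = det2 (ehead e - etail e) (p - etail e)"

text \<open>Incidence sign of edge e in the boundary of the (counterclockwise oriented) face s.\<close>
definition fsign :: "pt set \<Rightarrow> pt set \<Rightarrow> real" where
  "fsign s e = (let u = etail e; v = ehead e; w = (THE w. w \<in> s - e)
               in if det2 (v - u) (w - u) > 0 then 1 else -1)"

definition vsign :: "pt \<Rightarrow> pt set \<Rightarrow> real" where
  "vsign g e = (if g = ehead e then 1 else -1)"

text \<open>Boundary maps of the relative cellular chain complex with coefficients in P_m.\<close>
definition d2 :: "pt set set \<Rightarrow> (pt set \<Rightarrow> pt \<Rightarrow> real) \<Rightarrow> pt set \<Rightarrow> pt \<Rightarrow> real" where
  "d2 T B e = (\<lambda>p. \<Sum>s\<in>{s \<in> T. e \<subseteq> s}. fsign s e * B s p)"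

definition d1 :: "pt set set \<Rightarrow> (pt set \<Rightarrow> pt \<Rightarrow> real) \<Rightarrow> pt \<Rightarrow> pt \<Rightarrow> real" where
  "d1 T F g = (\<lambda>p. \<Sum>e\<in>{e \<in> int_edges T. g \<in> e}. vsign g e * F e p)"

definition Jedge :: "nat \<Rightarrow> (pt set \<Rightarrow> int) \<Rightarrow> pt set \<Rightarrow> (pt \<Rightarrow> real) set" where
  "Jedge m rr e = multiples m (\<lambda>p. lform e p ^ nat (rr e + 1))"

definition Jvert :: "pt set set \<Rightarrow> nat \<Rightarrow> (pt set \<Rightarrow> int) \<Rightarrow> pt \<Rightarrow> (pt \<Rightarrow> real) set" where
  "Jvert T m rr g = {f. \<exists>h. (\<forall>e\<in>int_edges T. g \<in> e \<longrightarrow> h e \<in> Jedge m rr e) \<and>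
        f = (\<lambda>p. \<Sum>e\<in>{e \<in> int_edges T. g \<in> e}. h e p)}"

text \<open>Lower-acyclicity of Q^r = C / I^r: H_1(Q^r) = 0 and H_0(Q^r) = 0.\<close>
definition H1_vanishes :: "pt set set \<Rightarrow> nat \<Rightarrow> (pt set \<Rightarrow> int) \<Rightarrow> bool" where
  "H1_vanishes T m rr \<longleftrightarrow>
    (\<forall>F. (\<forall>e\<in>int_edges T. F e \<in> polys m) \<and>
         (\<forall>g\<in>int_verts T. d1 T F g \<in> Jvert T m rr g) \<longrightarrow>
       (\<exists>B K. (\<forall>s\<in>T. B s \<in> polys m) \<and> (\<forall>e\<in>int_edges T. K e \<in> Jedge m rr e) \<and>
              (\<forall>e\<in>int_edges T. \<forall>p. F e p = d2 T B e p + K e p)))"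

definition H0_vanishes :: "pt set set \<Rightarrow> nat \<Rightarrow> (pt set \<Rightarrow> int) \<Rightarrow> bool" where
  "H0_vanishes T m rr \<longleftrightarrow>
    (\<forall>G. (\<forall>g\<in>int_verts T. G g \<in> polys m) \<longrightarrow>
       (\<exists>F J. (\<forall>e\<in>int_edges T. F e \<in> polys m) \<and> (\<forall>g\<in>int_verts T. J g \<in> Jvert T m rr g) \<and>
              (\<forall>g\<in>int_verts T. \<forall>p. G g p = d1 T F g p + J g p)))"

definition lower_acyclic :: "pt set set \<Rightarrow> nat \<Rightarrow> (pt set \<Rightarrow> int) \<Rightarrow> bool" where
  "lower_acyclic T m rr \<longleftrightarrow> H1_vanishes T m rr \<and> H0_vanishes T m rr"

end

(*
  Lowering the smoothness across the three edges of the face \<sigma> to -1 only enlarges the vertex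
  ideals, so H_0 stays zero. For H_1, let F be a 1-cycle of the new complex. The defect of F at a
  vertex u of \<sigma> is a polynomial of degree m, and since 3(r+1) <= 2m+2 it splits as a sum of
  parts P(u,w), w a vertex of \<sigma>, where P(u,w) vanishes to order r+1 at w (expand in
  barycentric coordinates of \<sigma>). Subtracting a suitable combination of these parts from F on the
  edges of \<sigma> leaves at u the defect sum_w P(w,u), which vanishes to order r+1 at u. Since at
  least r+2 distinct slopes meet at u, the (r+1)-st powers of the edge forms at u span all such
  polynomials (Lagrange interpolation in the slopes), so the corrected F is a cycle of the old
  complex. Lower acyclicity writes it as a boundary plus edge ideal terms, and the subtracted
  correction is absorbed on the edges of \<sigma>, whose ideals are now everything.
*)

theory Submission
  imports Defs "HOL-Computational_Algebra.Polynomial"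
begin

section \<open>Polynomials of bounded degree\<close>

definition monomial_exps :: "nat \<Rightarrow> (nat \<times> nat) set" where
  "monomial_exps n = (SIGMA i:{..n}. {..n - i})"

lemma mem_monomial_exps [simp]: "(i, j) \<in> monomial_exps n \<longleftrightarrow> i + j \<le> n"
  unfolding monomial_exps_def by auto

lemma finite_monomial_exps [simp]: "finite (monomial_exps n)"
  unfolding monomial_exps_def by auto

lemma polys_iff_monomial_sum:
  "f \<in> polys n \<longleftrightarrow>
     (\<exists>c. f = (\<lambda>p. \<Sum>k\<in>monomial_exps n. c k * fst p ^ fst k * snd p ^ snd k))"
proof -
  have "(\<Sum>i\<le>n. \<Sum>j\<le>n - i. c i j * x ^ i * y ^ j)
      = (\<Sum>k\<in>monomial_exps n. case_prod c k * x ^ fst k * y ^ snd k)" for c and x y :: real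
    unfolding monomial_exps_def by (simp add: sum.Sigma split_beta)
  then show ?thesis
    unfolding polys_def fun_eq_iff by (auto intro: exI[of _ "curry _"] exI[of _ "case_prod _"])
qed

lemma polys_obtain_coeffs:
  assumes "f \<in> polys n"
  obtains c where "f = (\<lambda>p. \<Sum>k\<in>monomial_exps n. c k * fst p ^ fst k * snd p ^ snd k)"
  using assms unfolding polys_iff_monomial_sum by blast

lemma polys_intro:
  assumes "finite K" and "\<And>k. k \<in> K \<Longrightarrow> ex k + ey k \<le> n"
    and "\<And>p. f p = (\<Sum>k\<in>K. d k * fst p ^ ex k * snd p ^ ey k)"
  shows "f \<in> polys n"
proof -
  define c where "c ij = (\<Sum>k | k \<in> K \<and> (ex k, ey k) = ij. d k)" for ij
  have "(\<Sum>ij\<in>monomial_exps n. c ij * x ^ fst ij * y ^ snd ij)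
      = (\<Sum>ij\<in>monomial_exps n. \<Sum>k | k \<in> K \<and> (ex k, ey k) = ij. d k * x ^ ex k * y ^ ey k)"
    for x y :: real
    unfolding c_def by (auto simp: sum_distrib_right intro!: sum.cong)
  also have "\<dots> x y = (\<Sum>k\<in>K. d k * x ^ ex k * y ^ ey k)" for x y :: real
    by (rule sum.group) (use assms(1,2) in auto)
  finally have "f = (\<lambda>p. \<Sum>ij\<in>monomial_exps n. c ij * fst p ^ fst ij * snd p ^ snd ij)"
    using assms(3) by (simp add: fun_eq_iff)
  then show ?thesis
    unfolding polys_iff_monomial_sum by blast
qed

lemma polys_const: "(\<lambda>p. c) \<in> polys n"
  by (rule polys_intro[where K = "{(0, 0)}" and ex = fst and ey = snd and d = "\<lambda>_. c"]) auto

lemma polys_add: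
  assumes "f \<in> polys n" and "g \<in> polys n"
  shows "(\<lambda>p. f p + g p) \<in> polys n"
proof -
  obtain c where f: "f = (\<lambda>p. \<Sum>k\<in>monomial_exps n. c k * fst p ^ fst k * snd p ^ snd k)"
    using assms(1) by (rule polys_obtain_coeffs)
  obtain c' where g: "g = (\<lambda>p. \<Sum>k\<in>monomial_exps n. c' k * fst p ^ fst k * snd p ^ snd k)"
    using assms(2) by (rule polys_obtain_coeffs)
  show ?thesis unfolding f g
    by (rule polys_intro[where K = "monomial_exps n" and ex = fst and ey = snd
          and d = "\<lambda>k. c k + c' k"]) (auto simp: algebra_simps sum.distrib)
qed

lemma polys_scale:
  assumes "f \<in> polys n"
  shows "(\<lambda>p. a * f p) \<in> polys n"
proof -
  obtain c where f: "f = (\<lambda>p. \<Sum>k\<in>monomial_exps n. c k * fst p ^ fst k * snd p ^ snd k)"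
    using assms by (rule polys_obtain_coeffs)
  show ?thesis unfolding f
    by (rule polys_intro[where K = "monomial_exps n" and ex = fst and ey = snd
          and d = "\<lambda>k. a * c k"]) (auto simp: algebra_simps sum_distrib_left)
qed

lemma polys_diff: "f \<in> polys n \<Longrightarrow> g \<in> polys n \<Longrightarrow> (\<lambda>p. f p - g p) \<in> polys n"
  using polys_add[OF _ polys_scale[of g n "-1"]] by simp

lemma polys_sum: "(\<And>i. i \<in> A \<Longrightarrow> F i \<in> polys n) \<Longrightarrow> (\<lambda>p. \<Sum>i\<in>A. F i p) \<in> polys n"
  by (induction A rule: infinite_finite_induct) (auto intro: polys_const polys_add)

definition affine_form :: "(pt \<Rightarrow> real) \<Rightarrow> bool" where
  "affine_form L \<longleftrightarrow> (\<exists>\<alpha> \<beta> \<gamma>. \<forall>p. L p = \<alpha> * fst p + \<beta> * snd p + \<gamma>)"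

lemma affine_form_const: "affine_form (\<lambda>p. c)"
  unfolding affine_form_def by (intro exI[of _ 0] exI[of _ c]) simp

lemma affine_form_fst: "affine_form fst"
  unfolding affine_form_def by (intro exI[of _ 1] exI[of _ 0]) simp

lemma affine_form_snd: "affine_form snd"
  unfolding affine_form_def by (intro exI[of _ 0] exI[of _ 1]) simp

lemma affine_form_scale: "affine_form L \<Longrightarrow> affine_form (\<lambda>p. c * L p)"
  unfolding affine_form_def by (metis (no_types, opaque_lifting) distrib_left mult.assoc)

lemma affine_form_det2: "affine_form (\<lambda>p. det2 (b - p) (c - p))"
  unfolding affine_form_def det2_def
  by (intro exI[of _ "snd b - snd c"] exI[of _ "fst c - fst b"]
        exI[of _ "fst b * snd c - snd b * fst c"]) (simp add: algebra_simps)

lemma affine_form_det2_dir: "affine_form (\<lambda>p. det2 d (p - v))"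
  unfolding affine_form_def det2_def
  by (intro exI[of _ "- snd d"] exI[of _ "fst d"] exI[of _ "snd d * fst v - fst d * snd v"])
    (simp add: algebra_simps)

lemma affine_form_vanishing_at:
  assumes "affine_form L" and "L v = 0"
  obtains \<alpha> \<beta> where "\<And>p. L p = \<alpha> * (fst p - fst v) + \<beta> * (snd p - snd v)"
proof -
  obtain \<alpha> \<beta> \<gamma> where L: "\<And>p. L p = \<alpha> * fst p + \<beta> * snd p + \<gamma>"
    using assms(1) unfolding affine_form_def by metis
  have "L p = L p - L v" for p using assms(2) by simp
  then show ?thesis using L by (intro that[of \<alpha> \<beta>]) (simp add: algebra_simps)
qed

lemma polys_mult_affine:
  assumes "f \<in> polys n" and "affine_form L"
  shows "(\<lambda>p. L p * f p) \<in> polys (Suc n)"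
proof -
  obtain \<alpha> \<beta> \<gamma> where L: "\<And>p. L p = \<alpha> * fst p + \<beta> * snd p + \<gamma>"
    using assms(2) unfolding affine_form_def by metis
  obtain c where f: "f = (\<lambda>p. \<Sum>k\<in>monomial_exps n. c k * fst p ^ fst k * snd p ^ snd k)"
    using assms(1) by (rule polys_obtain_coeffs)
  let ?K = "monomial_exps n"
  have "(\<lambda>p. \<Sum>k\<in>?K. \<alpha> * c k * fst p ^ Suc (fst k) * snd p ^ snd k) \<in> polys (Suc n)"
    by (rule polys_intro[where ex = "\<lambda>k. Suc (fst k)" and ey = snd]) auto
  moreover have "(\<lambda>p. \<Sum>k\<in>?K. \<beta> * c k * fst p ^ fst k * snd p ^ Suc (snd k)) \<in> polys (Suc n)"
    by (rule polys_intro[where ex = fst and ey = "\<lambda>k. Suc (snd k)"]) auto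
  moreover have "(\<lambda>p. \<Sum>k\<in>?K. \<gamma> * c k * fst p ^ fst k * snd p ^ snd k) \<in> polys (Suc n)"
    by (rule polys_intro[where ex = fst and ey = snd]) auto
  ultimately
  have "(\<lambda>p. (\<Sum>k\<in>?K. \<alpha> * c k * fst p ^ Suc (fst k) * snd p ^ snd k)
      + (\<Sum>k\<in>?K. \<beta> * c k * fst p ^ fst k * snd p ^ Suc (snd k))
      + (\<Sum>k\<in>?K. \<gamma> * c k * fst p ^ fst k * snd p ^ snd k)) \<in> polys (Suc n)"
    by (intro polys_add)
  moreover have "L p * f p = (\<Sum>k\<in>?K. \<alpha> * c k * fst p ^ Suc (fst k) * snd p ^ snd k)
      + (\<Sum>k\<in>?K. \<beta> * c k * fst p ^ fst k * snd p ^ Suc (snd k))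
      + (\<Sum>k\<in>?K. \<gamma> * c k * fst p ^ fst k * snd p ^ snd k)" for p
    unfolding L f by (simp add: sum_distrib_left sum.distrib algebra_simps)
  ultimately show ?thesis by simp
qed

lemma polys_mult_affine_power:
  assumes "affine_form L" and "G \<in> polys n"
  shows "(\<lambda>p. L p ^ k * G p) \<in> polys (n + k)"
proof (induction k)
  case (Suc k)
  then show ?case using polys_mult_affine[OF Suc assms(1)] by (simp add: mult.assoc)
qed (simp add: assms(2))

lemma polys_mono:
  assumes "f \<in> polys n" and "n \<le> n'"
  shows "f \<in> polys n'"
  using assms(2,1)
proof (induction n' rule: dec_induct)
  case (step n')
  then show ?case using polys_mult_affine[OF _ affine_form_const, of f n' 1] by simp
qed

lemma polys_induct [consumes 1, case_names const add scale mult_affine]: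
  assumes "f \<in> polys n"
    and const: "\<And>c. P 0 (\<lambda>p. c)"
    and add: "\<And>n f g. P n f \<Longrightarrow> P n g \<Longrightarrow> P n (\<lambda>p. f p + g p)"
    and scale: "\<And>n f c. P n f \<Longrightarrow> P n (\<lambda>p. c * f p)"
    and mult_affine: "\<And>n f L. P n f \<Longrightarrow> affine_form L \<Longrightarrow> P (Suc n) (\<lambda>p. L p * f p)"
  shows "P n f"
proof -
  have raise: "P n' f" if "P n f" "n \<le> n'" for n n' f
    using that(2,1) by (induction n' rule: dec_induct)
      (use mult_affine[OF _ affine_form_const, of _ _ 1] in simp_all)
  have monomial: "P (i + j) (\<lambda>p. fst p ^ i * snd p ^ j)" for i j
  proof (induction i)
    case 0
    show ?case
    proof (induction j)
      case (Suc j)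
      show ?case using mult_affine[OF Suc affine_form_snd] by (simp add: ac_simps)
    qed (use const[of 1] in simp)
  next
    case (Suc i)
    show ?case using mult_affine[OF Suc affine_form_fst] by (simp add: ac_simps)
  qed
  have sum: "P n (\<lambda>p. \<Sum>k\<in>K. F k p)" if "finite K" "\<And>k. k \<in> K \<Longrightarrow> P n (F k)" for K F
    using that by (induction K rule: finite_induct) (use raise[OF const[of 0]] add in simp_all)
  obtain c where f: "f = (\<lambda>p. \<Sum>k\<in>monomial_exps n. c k * fst p ^ fst k * snd p ^ snd k)"
    using assms(1) by (rule polys_obtain_coeffs)
  have "P n (\<lambda>p. \<Sum>k\<in>monomial_exps n. c k * (fst p ^ fst k * snd p ^ snd k))"
  proof (rule sum)
    fix k assume "k \<in> monomial_exps n"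
    then have "fst k + snd k \<le> n" by (cases k) simp
    then show "P n (\<lambda>p. c k * (fst p ^ fst k * snd p ^ snd k))"
      by (intro scale raise[OF monomial])
  qed simp
  moreover have "(\<lambda>p. \<Sum>k\<in>monomial_exps n. c k * (fst p ^ fst k * snd p ^ snd k)) = f"
    unfolding f by (simp add: mult.assoc)
  ultimately show ?thesis by simp
qed

lemma is_poly_add:
  assumes "is_poly f" and "is_poly g"
  shows "is_poly (\<lambda>p. f p + g p)"
proof -
  obtain n n' where "f \<in> polys n" "g \<in> polys n'" using assms unfolding is_poly_def by blast
  then have "f \<in> polys (max n n')" "g \<in> polys (max n n')" by (auto elim: polys_mono)
  then show ?thesis unfolding is_poly_def by (blast intro: polys_add)
qed

lemma is_poly_scale: "is_poly f \<Longrightarrow> is_poly (\<lambda>p. c * f p)"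
  unfolding is_poly_def using polys_scale by blast

section \<open>Vanishing to a given order at a point\<close>

text \<open>Degree-\<open>n\<close> elements of the \<open>k\<close>-th power of the maximal ideal at \<open>v\<close>, given by
  generators; the zero polynomial has every order, even beyond \<open>n\<close>.\<close>
inductive vanishes_to_order :: "pt \<Rightarrow> nat \<Rightarrow> nat \<Rightarrow> (pt \<Rightarrow> real) \<Rightarrow> bool" for v where
  const: "vanishes_to_order v 0 n (\<lambda>p. c)"
| zero: "vanishes_to_order v k n (\<lambda>p. 0)"
| add: "vanishes_to_order v k n f \<Longrightarrow> vanishes_to_order v k n g \<Longrightarrow>
    vanishes_to_order v k n (\<lambda>p. f p + g p)"
| scale: "vanishes_to_order v k n f \<Longrightarrow> vanishes_to_order v k n (\<lambda>p. c * f p)"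
| mult_affine: "vanishes_to_order v k n f \<Longrightarrow> affine_form L \<Longrightarrow>
    vanishes_to_order v k (Suc n) (\<lambda>p. L p * f p)"
| mult_vanishing: "vanishes_to_order v k n f \<Longrightarrow> affine_form L \<Longrightarrow> L v = 0 \<Longrightarrow>
    vanishes_to_order v (Suc k) (Suc n) (\<lambda>p. L p * f p)"

lemma vanishes_to_order_polys: "vanishes_to_order v k n f \<Longrightarrow> f \<in> polys n"
  by (induction rule: vanishes_to_order.induct)
    (auto intro: polys_const polys_add polys_scale polys_mult_affine)

lemma vanishes_to_order_above_degree: "vanishes_to_order v k n f \<Longrightarrow> n < k \<Longrightarrow> f = (\<lambda>p. 0)"
  by (induction rule: vanishes_to_order.induct) auto

lemma polys_vanishes_to_order_0: "f \<in> polys n \<Longrightarrow> vanishes_to_order v 0 n f"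
  by (induction rule: polys_induct) (auto intro: vanishes_to_order.intros)

lemma vanishes_to_order_sum:
  "(\<And>i. i \<in> A \<Longrightarrow> vanishes_to_order v k n (F i)) \<Longrightarrow> vanishes_to_order v k n (\<lambda>p. \<Sum>i\<in>A. F i p)"
  by (induction A rule: infinite_finite_induct) (auto intro: vanishes_to_order.zero vanishes_to_order.add)

section \<open>Splitting a polynomial among the vertices of a triangle\<close>

definition bary_coord :: "pt \<Rightarrow> pt \<Rightarrow> pt \<Rightarrow> pt \<Rightarrow> real" where
  "bary_coord a b c p = det2 (b - p) (c - p) / det2 (b - a) (c - a)"

lemma affine_form_bary_coord: "affine_form (bary_coord a b c)"
  unfolding bary_coord_def divide_inverse
  using affine_form_scale[OF affine_form_det2, of "inverse (det2 (b - a) (c - a))" b c]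
  by (simp add: mult.commute)

lemma bary_coord_vanishes [simp]: "bary_coord a b c b = 0" "bary_coord a b c c = 0"
  unfolding bary_coord_def det2_def by simp_all

lemma affine_form_bary_expansion:
  assumes "det2 (b - a) (c - a) \<noteq> 0" and "affine_form L"
  shows "L p = L a * bary_coord a b c p + L b * bary_coord b c a p + L c * bary_coord c a b p"
proof -
  obtain \<alpha> \<beta> \<gamma> where L: "\<And>p. L p = \<alpha> * fst p + \<beta> * snd p + \<gamma>"
    using assms(2) unfolding affine_form_def by metis
  define D where "D = det2 (b - a) (c - a)"
  have "det2 (c - b) (a - b) = D" "det2 (a - c) (b - c) = D"
    unfolding D_def det2_def by (simp_all add: algebra_simps)
  then have "L a * bary_coord a b c p + L b * bary_coord b c a p + L c * bary_coord c a b p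
      = (L a * det2 (b - p) (c - p) + L b * det2 (c - p) (a - p) + L c * det2 (a - p) (b - p)) / D"
    unfolding bary_coord_def D_def by (simp add: add_divide_distrib)
  also have "L a * det2 (b - p) (c - p) + L b * det2 (c - p) (a - p) + L c * det2 (a - p) (b - p)
      = D * L p"
    unfolding L D_def det2_def fst_diff snd_diff by algebra
  finally show ?thesis using assms(1) unfolding D_def by simp
qed

text \<open>Multiplying by the barycentric coordinate of \<open>a\<close> raises the degree by one and the
  attainable orders at \<open>b\<close> and \<open>c\<close> by one each, so the bound \<open>2 * n + 2\<close> on the total order is
  preserved; this is why every polynomial splits (\<open>polys_splits_at_vertices\<close>).\<close>
definition splits_at_vertices :: "pt \<Rightarrow> pt \<Rightarrow> pt \<Rightarrow> nat \<Rightarrow> (pt \<Rightarrow> real) \<Rightarrow> bool" where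
  "splits_at_vertices a b c n f \<longleftrightarrow>
     (\<forall>\<alpha> \<beta> \<gamma>. \<alpha> + \<beta> + \<gamma> \<le> 2 * n + 2 \<longrightarrow>
        (\<exists>A B C. vanishes_to_order a \<alpha> n A \<and> vanishes_to_order b \<beta> n B \<and>
                 vanishes_to_order c \<gamma> n C \<and> f = (\<lambda>p. A p + B p + C p)))"

lemma splits_at_verticesE:
  assumes "splits_at_vertices a b c n f" and "\<alpha> + \<beta> + \<gamma> \<le> 2 * n + 2"
  obtains A B C where "vanishes_to_order a \<alpha> n A" "vanishes_to_order b \<beta> n B"
    "vanishes_to_order c \<gamma> n C" "f = (\<lambda>p. A p + B p + C p)"
  using assms unfolding splits_at_vertices_def by blast

lemma splits_at_vertices_polys: "splits_at_vertices a b c n f \<Longrightarrow> f \<in> polys n"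
  by (rule splits_at_verticesE[of a b c n f 0 0 0])
    (auto intro!: polys_add dest!: vanishes_to_order_polys)

lemma splits_at_vertices_rotate:
  assumes "splits_at_vertices a b c n f"
  shows "splits_at_vertices b c a n f"
  unfolding splits_at_vertices_def
proof (intro allI impI)
  fix \<alpha> \<beta> \<gamma> assume "\<alpha> + \<beta> + \<gamma> \<le> 2 * n + 2"
  then have "\<gamma> + \<alpha> + \<beta> \<le> 2 * n + 2" by simp
  with assms obtain A B C where "vanishes_to_order a \<gamma> n A" "vanishes_to_order b \<alpha> n B"
    "vanishes_to_order c \<beta> n C" and f: "f = (\<lambda>p. A p + B p + C p)"
    by (rule splits_at_verticesE)
  moreover have "f = (\<lambda>p. B p + C p + A p)" unfolding f by (simp add: ac_simps)
  ultimately show "\<exists>B C A. vanishes_to_order b \<alpha> n B \<and> vanishes_to_order c \<beta> n C \<and>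
      vanishes_to_order a \<gamma> n A \<and> f = (\<lambda>p. B p + C p + A p)"
    by blast
qed

lemma polys_split_with_order_0:
  assumes "f \<in> polys n" and "\<alpha> = 0 \<or> \<beta> = 0 \<or> \<gamma> = 0"
  shows "\<exists>A B C. vanishes_to_order a \<alpha> n A \<and> vanishes_to_order b \<beta> n B \<and>
                 vanishes_to_order c \<gamma> n C \<and> f = (\<lambda>p. A p + B p + C p)"
proof -
  note f0 = polys_vanishes_to_order_0[OF assms(1)] and 0 = vanishes_to_order.zero
  from assms(2) consider "\<alpha> = 0" | "\<beta> = 0" | "\<gamma> = 0" by blast
  then show ?thesis
  proof cases
    case 1
    have "f = (\<lambda>p. f p + 0 + 0)" by simp
    with 1 f0[of a] 0[of b \<beta>] 0[of c \<gamma>] show ?thesis by blast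
  next
    case 2
    have "f = (\<lambda>p. 0 + f p + 0)" by simp
    with 2 f0[of b] 0[of a \<alpha>] 0[of c \<gamma>] show ?thesis by blast
  next
    case 3
    have "f = (\<lambda>p. 0 + 0 + f p)" by simp
    with 3 f0[of c] 0[of a \<alpha>] 0[of b \<beta>] show ?thesis by blast
  qed
qed

lemma splits_at_vertices_const: "splits_at_vertices a b c 0 (\<lambda>p. d)"
  unfolding splits_at_vertices_def
  by (intro allI impI polys_split_with_order_0 polys_const) linarith

lemma splits_at_vertices_add:
  assumes "splits_at_vertices a b c n f" and "splits_at_vertices a b c n g"
  shows "splits_at_vertices a b c n (\<lambda>p. f p + g p)"
  unfolding splits_at_vertices_def
proof (intro allI impI)
  fix \<alpha> \<beta> \<gamma> assume ord: "\<alpha> + \<beta> + \<gamma> \<le> 2 * n + 2"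
  obtain A B C where A: "vanishes_to_order a \<alpha> n A" and B: "vanishes_to_order b \<beta> n B"
    and C: "vanishes_to_order c \<gamma> n C" and f: "f = (\<lambda>p. A p + B p + C p)"
    using assms(1) ord by (rule splits_at_verticesE)
  obtain A' B' C' where A': "vanishes_to_order a \<alpha> n A'" and B': "vanishes_to_order b \<beta> n B'"
    and C': "vanishes_to_order c \<gamma> n C'" and g: "g = (\<lambda>p. A' p + B' p + C' p)"
    using assms(2) ord by (rule splits_at_verticesE)
  have "vanishes_to_order a \<alpha> n (\<lambda>p. A p + A' p)" using A A' by (rule vanishes_to_order.add)
  moreover have "vanishes_to_order b \<beta> n (\<lambda>p. B p + B' p)" using B B' by (rule vanishes_to_order.add)
  moreover have "vanishes_to_order c \<gamma> n (\<lambda>p. C p + C' p)" using C C' by (rule vanishes_to_order.add)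
  moreover have "(\<lambda>p. f p + g p) = (\<lambda>p. (A p + A' p) + (B p + B' p) + (C p + C' p))"
    unfolding f g by (simp add: ac_simps)
  ultimately show "\<exists>A B C. vanishes_to_order a \<alpha> n A \<and> vanishes_to_order b \<beta> n B \<and>
      vanishes_to_order c \<gamma> n C \<and> (\<lambda>p. f p + g p) = (\<lambda>p. A p + B p + C p)"
    by blast
qed

lemma splits_at_vertices_scale:
  assumes "splits_at_vertices a b c n f"
  shows "splits_at_vertices a b c n (\<lambda>p. d * f p)"
  unfolding splits_at_vertices_def
proof (intro allI impI)
  fix \<alpha> \<beta> \<gamma> assume ord: "\<alpha> + \<beta> + \<gamma> \<le> 2 * n + 2"
  obtain A B C where "vanishes_to_order a \<alpha> n A" "vanishes_to_order b \<beta> n B"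
    "vanishes_to_order c \<gamma> n C" and f: "f = (\<lambda>p. A p + B p + C p)"
    using assms ord by (rule splits_at_verticesE)
  then have "vanishes_to_order a \<alpha> n (\<lambda>p. d * A p)" "vanishes_to_order b \<beta> n (\<lambda>p. d * B p)"
    "vanishes_to_order c \<gamma> n (\<lambda>p. d * C p)"
    by (auto intro: vanishes_to_order.scale)
  moreover have "(\<lambda>p. d * f p) = (\<lambda>p. d * A p + d * B p + d * C p)"
    unfolding f by (simp add: distrib_left)
  ultimately show "\<exists>A B C. vanishes_to_order a \<alpha> n A \<and> vanishes_to_order b \<beta> n B \<and>
      vanishes_to_order c \<gamma> n C \<and> (\<lambda>p. d * f p) = (\<lambda>p. A p + B p + C p)"
    by blast
qed

lemma splits_at_vertices_mult_bary_coord: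
  assumes "splits_at_vertices a b c n f"
  shows "splits_at_vertices a b c (Suc n) (\<lambda>p. bary_coord a b c p * f p)"
  unfolding splits_at_vertices_def
proof (intro allI impI)
  fix \<alpha> \<beta> \<gamma> assume ord: "\<alpha> + \<beta> + \<gamma> \<le> 2 * Suc n + 2"
  let ?l = "bary_coord a b c"
  show "\<exists>A B C. vanishes_to_order a \<alpha> (Suc n) A \<and> vanishes_to_order b \<beta> (Suc n) B \<and>
      vanishes_to_order c \<gamma> (Suc n) C \<and> (\<lambda>p. ?l p * f p) = (\<lambda>p. A p + B p + C p)"
  proof (cases "\<beta> = 0 \<or> \<gamma> = 0")
    case True
    have "(\<lambda>p. ?l p * f p) \<in> polys (Suc n)"
      by (intro polys_mult_affine splits_at_vertices_polys[OF assms] affine_form_bary_coord)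
    then show ?thesis using True by (intro polys_split_with_order_0) auto
  next
    case False
    then obtain \<beta>' \<gamma>' where \<beta>: "\<beta> = Suc \<beta>'" and \<gamma>: "\<gamma> = Suc \<gamma>'"
      by (metis not0_implies_Suc)
    have "\<alpha> + \<beta>' + \<gamma>' \<le> 2 * n + 2" using ord \<beta> \<gamma> by simp
    with assms obtain A B C where A: "vanishes_to_order a \<alpha> n A" and B: "vanishes_to_order b \<beta>' n B"
      and C: "vanishes_to_order c \<gamma>' n C" and f: "f = (\<lambda>p. A p + B p + C p)"
      by (rule splits_at_verticesE)
    have "vanishes_to_order a \<alpha> (Suc n) (\<lambda>p. ?l p * A p)"
      by (rule vanishes_to_order.mult_affine[OF A affine_form_bary_coord])
    moreover have "vanishes_to_order b \<beta> (Suc n) (\<lambda>p. ?l p * B p)"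
      unfolding \<beta> by (rule vanishes_to_order.mult_vanishing[OF B affine_form_bary_coord]) simp
    moreover have "vanishes_to_order c \<gamma> (Suc n) (\<lambda>p. ?l p * C p)"
      unfolding \<gamma> by (rule vanishes_to_order.mult_vanishing[OF C affine_form_bary_coord]) simp
    moreover have "(\<lambda>p. ?l p * f p) = (\<lambda>p. ?l p * A p + ?l p * B p + ?l p * C p)"
      unfolding f by (simp add: distrib_left)
    ultimately show ?thesis by blast
  qed
qed

lemma splits_at_vertices_mult_affine:
  assumes "det2 (b - a) (c - a) \<noteq> 0" and "affine_form L" and f: "splits_at_vertices a b c n f"
  shows "splits_at_vertices a b c (Suc n) (\<lambda>p. L p * f p)"
proof -
  note rotate = splits_at_vertices_rotate and mult = splits_at_vertices_mult_bary_coord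
    and scale = splits_at_vertices_scale
  have a: "splits_at_vertices a b c (Suc n) (\<lambda>p. L a * (bary_coord a b c p * f p))"
    by (rule scale[OF mult[OF f]])
  have b: "splits_at_vertices a b c (Suc n) (\<lambda>p. L b * (bary_coord b c a p * f p))"
    by (rule scale[OF rotate[OF rotate[OF mult[OF rotate[OF f]]]]])
  have c: "splits_at_vertices a b c (Suc n) (\<lambda>p. L c * (bary_coord c a b p * f p))"
    by (rule scale[OF rotate[OF mult[OF rotate[OF rotate[OF f]]]]])
  have "splits_at_vertices a b c (Suc n) (\<lambda>p. L a * (bary_coord a b c p * f p)
      + L b * (bary_coord b c a p * f p) + L c * (bary_coord c a b p * f p))"
    by (rule splits_at_vertices_add[OF splits_at_vertices_add[OF a b] c])
  moreover have "(\<lambda>p. L a * (bary_coord a b c p * f p) + L b * (bary_coord b c a p * f p)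
      + L c * (bary_coord c a b p * f p)) = (\<lambda>p. L p * f p)"
  proof
    fix p
    show "L a * (bary_coord a b c p * f p) + L b * (bary_coord b c a p * f p)
        + L c * (bary_coord c a b p * f p) = L p * f p"
      using affine_form_bary_expansion[OF assms(1,2), of p] by (simp add: algebra_simps)
  qed
  ultimately show ?thesis by simp
qed

lemma polys_splits_at_vertices:
  assumes "det2 (b - a) (c - a) \<noteq> 0" and "f \<in> polys n"
  shows "splits_at_vertices a b c n f"
  using assms(2)
  by (induction rule: polys_induct) (auto intro: splits_at_vertices_const splits_at_vertices_add
      splits_at_vertices_scale splits_at_vertices_mult_affine[OF assms(1)])

lemma polys_split_over_face:
  assumes "\<sigma> = {a, b, c}" and "det2 (b - a) (c - a) \<noteq> 0" and "a \<noteq> b" and "a \<noteq> c" and "b \<noteq> c"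
    and "3 * k \<le> 2 * m + 2" and "\<And>u. G u \<in> polys m"
  obtains P where "\<And>u w. P u w \<in> polys m" and "\<And>u w. w \<in> \<sigma> \<Longrightarrow> vanishes_to_order w k m (P u w)"
    and "\<And>u. G u = (\<lambda>p. \<Sum>w\<in>\<sigma>. P u w p)"
proof -
  have "\<forall>u. \<exists>Q. (\<forall>w. Q w \<in> polys m) \<and> (\<forall>w\<in>\<sigma>. vanishes_to_order w k m (Q w)) \<and>
      G u = (\<lambda>p. \<Sum>w\<in>\<sigma>. Q w p)"
  proof
    fix u
    have "splits_at_vertices a b c m (G u)" by (rule polys_splits_at_vertices[OF assms(2,7)])
    moreover have "k + k + k \<le> 2 * m + 2" using assms(6) by simp
    ultimately obtain A B C where "vanishes_to_order a k m A" "vanishes_to_order b k m B"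
      "vanishes_to_order c k m C" and "G u = (\<lambda>p. A p + B p + C p)"
      by (rule splits_at_verticesE)
    moreover define Q where "Q w = (if w = a then A else if w = b then B else C)" for w
    ultimately show "\<exists>Q. (\<forall>w. Q w \<in> polys m) \<and> (\<forall>w\<in>\<sigma>. vanishes_to_order w k m (Q w)) \<and>
        G u = (\<lambda>p. \<Sum>w\<in>\<sigma>. Q w p)"
      using assms(1,3-5) by (intro exI[of _ Q]) (auto simp: Q_def intro: vanishes_to_order_polys)
  qed
  from choice[OF this] obtain P where P: "\<forall>u. (\<forall>w. P u w \<in> polys m) \<and>
      (\<forall>w\<in>\<sigma>. vanishes_to_order w k m (P u w)) \<and> G u = (\<lambda>p. \<Sum>w\<in>\<sigma>. P u w p)"
    by blast
  show ?thesis by (rule that[of P]) (use P in auto)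
qed

section \<open>Powers of linear forms through a vertex\<close>

lemma binary_form_mult_left:
  fixes X Y :: "'a :: comm_semiring_1"
  shows "X * (\<Sum>j\<le>k. X ^ j * Y ^ (k - j) * g j)
    = (\<Sum>j\<le>Suc k. X ^ j * Y ^ (Suc k - j) * (if j = 0 then 0 else g (j - 1)))"
  unfolding sum.atMost_Suc_shift by (simp add: sum_distrib_left algebra_simps)

lemma binary_form_mult_right:
  fixes X Y :: "'a :: comm_semiring_1"
  shows "Y * (\<Sum>j\<le>k. X ^ j * Y ^ (k - j) * g j)
    = (\<Sum>j\<le>Suc k. X ^ j * Y ^ (Suc k - j) * (if j \<le> k then g j else 0))"
  unfolding sum.atMost_Suc
  by (auto simp: sum_distrib_left algebra_simps Suc_diff_le intro!: sum.cong)

definition shear_x :: "real \<Rightarrow> pt \<Rightarrow> pt \<Rightarrow> real" where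
  "shear_x t v p = (fst p - fst v) - t * (snd p - snd v)"

definition shear_y :: "pt \<Rightarrow> pt \<Rightarrow> real" where
  "shear_y v p = snd p - snd v"

definition has_sheared_expansion :: "real \<Rightarrow> pt \<Rightarrow> nat \<Rightarrow> nat \<Rightarrow> (pt \<Rightarrow> real) \<Rightarrow> bool" where
  "has_sheared_expansion t v k n f \<longleftrightarrow> (\<exists>g. (\<forall>j\<le>k. g j \<in> polys (n - k)) \<and>
     f = (\<lambda>p. \<Sum>j\<le>k. shear_x t v p ^ j * shear_y v p ^ (k - j) * g j p))"

lemma has_sheared_expansion_const: "has_sheared_expansion t v 0 n (\<lambda>p. c)"
  unfolding has_sheared_expansion_def by (auto intro!: exI[of _ "\<lambda>j p. c"] polys_const)

lemma has_sheared_expansion_zero: "has_sheared_expansion t v k n (\<lambda>p. 0)"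
  unfolding has_sheared_expansion_def by (auto intro!: exI[of _ "\<lambda>j p. 0"] polys_const)

lemma has_sheared_expansion_add:
  assumes "has_sheared_expansion t v k n f" and "has_sheared_expansion t v k n g"
  shows "has_sheared_expansion t v k n (\<lambda>p. f p + g p)"
proof -
  obtain h h' where "\<forall>j\<le>k. h j \<in> polys (n - k)" "\<forall>j\<le>k. h' j \<in> polys (n - k)"
    and "f = (\<lambda>p. \<Sum>j\<le>k. shear_x t v p ^ j * shear_y v p ^ (k - j) * h j p)"
    and "g = (\<lambda>p. \<Sum>j\<le>k. shear_x t v p ^ j * shear_y v p ^ (k - j) * h' j p)"
    using assms unfolding has_sheared_expansion_def by blast
  then show ?thesis
    unfolding has_sheared_expansion_def
    by (auto intro!: exI[of _ "\<lambda>j p. h j p + h' j p"] polys_add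
        simp: sum.distrib[symmetric] algebra_simps)
qed

lemma has_sheared_expansion_scale:
  assumes "has_sheared_expansion t v k n f"
  shows "has_sheared_expansion t v k n (\<lambda>p. c * f p)"
proof -
  obtain h where "\<forall>j\<le>k. h j \<in> polys (n - k)"
    and "f = (\<lambda>p. \<Sum>j\<le>k. shear_x t v p ^ j * shear_y v p ^ (k - j) * h j p)"
    using assms unfolding has_sheared_expansion_def by blast
  then show ?thesis
    unfolding has_sheared_expansion_def
    by (auto intro!: exI[of _ "\<lambda>j p. c * h j p"] polys_scale simp: sum_distrib_left algebra_simps)
qed

lemma has_sheared_expansion_mult_affine:
  assumes "has_sheared_expansion t v k n f" and "affine_form L" and "k \<le> n"
  shows "has_sheared_expansion t v k (Suc n) (\<lambda>p. L p * f p)"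
proof -
  obtain h where h: "\<forall>j\<le>k. h j \<in> polys (n - k)"
    and f: "f = (\<lambda>p. \<Sum>j\<le>k. shear_x t v p ^ j * shear_y v p ^ (k - j) * h j p)"
    using assms(1) unfolding has_sheared_expansion_def by blast
  have "\<forall>j\<le>k. (\<lambda>p. L p * h j p) \<in> polys (Suc n - k)"
    using h polys_mult_affine[OF _ assms(2)] assms(3) by (simp add: Suc_diff_le)
  then show ?thesis
    unfolding has_sheared_expansion_def f
    by (auto intro!: exI[of _ "\<lambda>j p. L p * h j p"] simp: sum_distrib_left algebra_simps)
qed

lemma has_sheared_expansion_mult_shear_x:
  assumes "has_sheared_expansion t v k n f"
  shows "has_sheared_expansion t v (Suc k) (Suc n) (\<lambda>p. shear_x t v p * f p)"
proof -
  obtain h where h: "\<forall>j\<le>k. h j \<in> polys (n - k)"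
    and f: "f = (\<lambda>p. \<Sum>j\<le>k. shear_x t v p ^ j * shear_y v p ^ (k - j) * h j p)"
    using assms unfolding has_sheared_expansion_def by blast
  have "\<forall>j\<le>Suc k. (\<lambda>p. if j = 0 then 0 else h (j - 1) p) \<in> polys (Suc n - Suc k)"
  proof (intro allI impI)
    fix j assume "j \<le> Suc k"
    then show "(\<lambda>p. if j = 0 then 0 else h (j - 1) p) \<in> polys (Suc n - Suc k)"
      using h polys_const[of 0] by (cases j) auto
  qed
  then show ?thesis
    unfolding has_sheared_expansion_def f binary_form_mult_left
    by (auto intro!: exI[of _ "\<lambda>j p. if j = 0 then 0 else h (j - 1) p"])
qed

lemma has_sheared_expansion_mult_shear_y:
  assumes "has_sheared_expansion t v k n f"
  shows "has_sheared_expansion t v (Suc k) (Suc n) (\<lambda>p. shear_y v p * f p)"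
proof -
  obtain h where h: "\<forall>j\<le>k. h j \<in> polys (n - k)"
    and f: "f = (\<lambda>p. \<Sum>j\<le>k. shear_x t v p ^ j * shear_y v p ^ (k - j) * h j p)"
    using assms unfolding has_sheared_expansion_def by blast
  have "\<forall>j\<le>Suc k. (\<lambda>p. if j \<le> k then h j p else 0) \<in> polys (Suc n - Suc k)"
  proof (intro allI impI)
    fix j
    show "(\<lambda>p. if j \<le> k then h j p else 0) \<in> polys (Suc n - Suc k)"
      using h polys_const[of 0] by (cases "j \<le> k") auto
  qed
  then show ?thesis
    unfolding has_sheared_expansion_def f binary_form_mult_right
    by (auto intro!: exI[of _ "\<lambda>j p. if j \<le> k then h j p else 0"])
qed

lemma has_sheared_expansion_mult_vanishing:
  assumes "has_sheared_expansion t v k n f" and "affine_form L" and "L v = 0"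
  shows "has_sheared_expansion t v (Suc k) (Suc n) (\<lambda>p. L p * f p)"
proof -
  obtain \<alpha> \<beta> where L: "\<And>p. L p = \<alpha> * (fst p - fst v) + \<beta> * (snd p - snd v)"
    using affine_form_vanishing_at[OF assms(2,3)] by blast
  have "(\<lambda>p. L p * f p)
      = (\<lambda>p. \<alpha> * (shear_x t v p * f p) + (\<alpha> * t + \<beta>) * (shear_y v p * f p))"
    unfolding L shear_x_def shear_y_def by (simp add: algebra_simps)
  then show ?thesis
    by (simp add: has_sheared_expansion_add has_sheared_expansion_scale
        has_sheared_expansion_mult_shear_x has_sheared_expansion_mult_shear_y assms(1))
qed

lemma vanishes_to_order_sheared_expansion:
  "vanishes_to_order v k n f \<Longrightarrow> k \<le> n \<Longrightarrow> has_sheared_expansion t v k n f"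
proof (induction rule: vanishes_to_order.induct)
  case (mult_affine k n f L)
  show ?case
  proof (cases "k \<le> n")
    case True
    then show ?thesis using mult_affine by (intro has_sheared_expansion_mult_affine) auto
  next
    case False
    then have "f = (\<lambda>p. 0)" using mult_affine.hyps(1) by (intro vanishes_to_order_above_degree) auto
    then show ?thesis by (simp add: has_sheared_expansion_zero)
  qed
qed (auto intro: has_sheared_expansion_const has_sheared_expansion_zero has_sheared_expansion_add
    has_sheared_expansion_scale has_sheared_expansion_mult_vanishing)

definition lagrange_basis :: "real set \<Rightarrow> real \<Rightarrow> real poly" where
  "lagrange_basis S l = smult (inverse (\<Prod>\<mu>\<in>S - {l}. l - \<mu>)) (\<Prod>\<mu>\<in>S - {l}. [:- \<mu>, 1:])"

lemma poly_lagrange_basis: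
  assumes "finite S" and "l \<in> S" and "x \<in> S"
  shows "poly (lagrange_basis S l) x = (if l = x then 1 else 0)"
proof (cases "l = x")
  case True
  have "(\<Prod>\<mu>\<in>S - {l}. l - \<mu>) \<noteq> 0" using assms(1) by (simp add: prod_zero_iff)
  then show ?thesis using True by (simp add: lagrange_basis_def poly_prod)
next
  case False
  have "(\<Prod>\<mu>\<in>S - {l}. poly [:- \<mu>, 1:] x) = 0"
    using assms False by (intro prod_zero) (auto intro!: bexI[of _ x])
  then show ?thesis using False by (simp add: lagrange_basis_def poly_prod)
qed

lemma degree_lagrange_basis:
  assumes "finite S" and "l \<in> S"
  shows "degree (lagrange_basis S l) < card S"
proof -
  have "degree (\<Prod>\<mu>\<in>S - {l}. [:- \<mu>, 1:]) \<le> sum (degree \<circ> (\<lambda>\<mu>. [:- \<mu>, 1:])) (S - {l})"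
    by (rule degree_prod_sum_le) (use assms in auto)
  also have "\<dots> < card S"
    using assms card_gt_0_iff[of S] by auto
  finally show ?thesis unfolding lagrange_basis_def using degree_smult_le le_less_trans by blast
qed

lemma dual_basis_of_powers:
  fixes S :: "real set"
  assumes "finite S" and "card S = Suc k" and "j \<le> k"
  obtains c where "\<And>i. i \<le> k \<Longrightarrow> (\<Sum>l\<in>S. c l * l ^ i) = (if i = j then 1 else 0)"
proof
  fix i assume i: "i \<le> k"
  define Q where "Q = (\<Sum>l\<in>S. smult (l ^ i) (lagrange_basis S l))"
  have "Q = monom 1 i"
  proof (rule poly_eqI_degree[of S])
    fix x assume x: "x \<in> S"
    have "poly Q x = (\<Sum>l\<in>S. l ^ i * (if l = x then 1 else 0))"
      unfolding Q_def poly_sum using assms(1) x by (auto simp: poly_lagrange_basis intro!: sum.cong)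
    also have "\<dots> = x ^ i" using assms(1) x by (simp add: if_distrib cong: if_cong)
    finally show "poly Q x = poly (monom 1 i) x" by (simp add: poly_monom)
  next
    show "degree Q < card S" unfolding Q_def
      using assms(1) degree_lagrange_basis[OF assms(1)] degree_smult_le le_less_trans
      by (intro degree_sum_less) (auto simp: assms(2))
    show "degree (monom (1::real) i) < card S" using assms(2) i by (simp add: degree_monom_eq)
  qed
  then have "coeff Q j = (if i = j then 1 else 0)" by simp
  then show "(\<Sum>l\<in>S. coeff (lagrange_basis S l) j * l ^ i) = (if i = j then 1 else 0)"
    unfolding Q_def coeff_sum by (simp add: mult.commute)
qed

lemma binary_monomial_in_span_of_powers:
  fixes S :: "real set"
  assumes "finite S" and "card S = Suc k" and "j \<le> k"
  obtains c where "\<And>X Y. X ^ j * Y ^ (k - j) = (\<Sum>l\<in>S. c l * (Y + l * X) ^ k)"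
proof -
  obtain c where c: "\<And>i. i \<le> k \<Longrightarrow> (\<Sum>l\<in>S. c l * l ^ i) = (if i = j then 1 else 0)"
    using dual_basis_of_powers[OF assms] by blast
  define B where "B = real (k choose j)"
  have "B \<noteq> 0" unfolding B_def using assms(3) by simp
  have "(\<Sum>l\<in>S. c l * (Y + l * X) ^ k) = B * X ^ j * Y ^ (k - j)" for X Y :: real
  proof -
    have "(\<Sum>l\<in>S. c l * (Y + l * X) ^ k)
        = (\<Sum>l\<in>S. c l * (\<Sum>i\<le>k. real (k choose i) * (l * X) ^ i * Y ^ (k - i)))"
      by (simp only: add.commute[of Y] binomial_ring)
    also have "\<dots> = (\<Sum>i\<le>k. real (k choose i) * X ^ i * Y ^ (k - i) * (\<Sum>l\<in>S. c l * l ^ i))"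
      by (simp add: sum_distrib_left sum_distrib_right power_mult_distrib algebra_simps
          sum.swap[of _ S])
    also have "\<dots> = (\<Sum>i\<le>k. real (k choose i) * X ^ i * Y ^ (k - i) * (if i = j then 1 else 0))"
      using c by (intro sum.cong) auto
    also have "\<dots> = B * X ^ j * Y ^ (k - j)"
      using assms(3) by (simp add: B_def if_distrib cong: if_cong)
    finally show ?thesis .
  qed
  then show ?thesis
    using \<open>B \<noteq> 0\<close> by (intro that[of "\<lambda>l. c l / B"]) (simp add: sum_divide_distrib[symmetric])
qed

lemma span_eq_if_det2_eq_0:
  fixes d d' :: pt
  assumes "d \<noteq> 0" and "d' \<noteq> 0" and "det2 d d' = 0"
  shows "span {d} = span {d'}"
proof -
  obtain c where c: "d' = c *\<^sub>R d"
  proof (cases "fst d = 0")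
    case True
    then have "snd d \<noteq> 0" using assms(1) by (simp add: prod_eq_iff)
    moreover have "fst d' = 0" using assms(3) True \<open>snd d \<noteq> 0\<close> by (simp add: det2_def)
    ultimately show ?thesis using True by (intro that[of "snd d' / snd d"]) (simp add: prod_eq_iff)
  next
    case False
    have "snd d' = fst d' / fst d * snd d" using assms(3) False by (simp add: det2_def field_simps)
    then show ?thesis using False by (intro that[of "fst d' / fst d"]) (simp add: prod_eq_iff)
  qed
  with assms(2) have "c \<noteq> 0" by auto
  with c have d: "d = inverse c *\<^sub>R d'" by simp
  have "d' \<in> span {d}" unfolding c by (intro span_scale span_base singletonI)
  moreover have "d \<in> span {d'}" by (subst d) (intro span_scale span_base singletonI)
  ultimately show ?thesis unfolding span_eq by simp
qed

lemma obtain_shear: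
  assumes "finite D" and "0 \<notin> D"
  obtains A slope t where "\<And>d. d \<in> D \<Longrightarrow> A d \<noteq> 0"
    and "\<And>d p. d \<in> D \<Longrightarrow> det2 d (p - v) = A d * (shear_y v p + slope d * shear_x t v p)"
    and "\<And>d d'. d \<in> D \<Longrightarrow> d' \<in> D \<Longrightarrow> slope d = slope d' \<Longrightarrow> det2 d d' = 0"
proof -
  obtain t :: real where t: "t \<notin> (\<lambda>d. fst d / snd d) ` D"
    using ex_new_if_finite[OF infinite_UNIV_char_0 finite_imageI[OF assms(1)]] by blast
  define A where "A d = fst d - t * snd d" for d
  have A: "A d \<noteq> 0" if "d \<in> D" for d
  proof (cases "snd d = 0")
    case True
    from that assms(2) have "d \<noteq> 0" by blast
    with True have "fst d \<noteq> 0" by (cases d) (simp add: zero_prod_def)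
    with True show ?thesis unfolding A_def by simp
  next
    case False
    from t that have "fst d / snd d \<noteq> t" by blast
    with False show ?thesis unfolding A_def by (simp add: field_simps)
  qed
  define slope where "slope d = - snd d / A d" for d
  have det2_eq: "det2 d (p - v) = A d * (shear_y v p + slope d * shear_x t v p)" if "d \<in> D" for d p
  proof -
    have "A d * (shear_y v p + slope d * shear_x t v p) = A d * shear_y v p - snd d * shear_x t v p"
      using A[OF that] by (simp add: slope_def right_diff_distrib)
    also have "\<dots> = det2 d (p - v)"
      unfolding A_def shear_x_def shear_y_def det2_def by (simp add: algebra_simps)
    finally show ?thesis ..
  qed
  have slope: "det2 d d' = 0" if "d \<in> D" "d' \<in> D" "slope d = slope d'" for d d'
  proof -
    from that have "snd d * A d' = snd d' * A d"
      using A unfolding slope_def by (simp add: frac_eq_eq)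
    then show ?thesis unfolding A_def det2_def by (simp add: algebra_simps)
  qed
  show ?thesis by (rule that[OF A det2_eq slope])
qed

text \<open>After the shear, each edge form \<open>det2 d (p - v)\<close> is a nonzero multiple of
  \<open>shear_y v p + \<lambda> * shear_x t v p\<close>, with distinct \<open>\<lambda>\<close> for non-parallel edges, so binary
  forms in the sheared coordinates reduce to interpolation in \<open>\<lambda>\<close>.\<close>
lemma sheared_monomial_in_span_of_powers:
  assumes "finite D" and "card D = Suc k" and "0 \<notin> D"
    and "\<And>d d'. d \<in> D \<Longrightarrow> d' \<in> D \<Longrightarrow> d \<noteq> d' \<Longrightarrow> det2 d d' \<noteq> 0"
  obtains t where "\<And>j. j \<le> k \<Longrightarrow>
    \<exists>c. \<forall>p. shear_x t v p ^ j * shear_y v p ^ (k - j) = (\<Sum>d\<in>D. c d * det2 d (p - v) ^ k)"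
proof -
  obtain A slope t where A: "\<And>d. d \<in> D \<Longrightarrow> A d \<noteq> 0"
    and det2_eq: "\<And>d p. d \<in> D \<Longrightarrow> det2 d (p - v) = A d * (shear_y v p + slope d * shear_x t v p)"
    and slope: "\<And>d d'. d \<in> D \<Longrightarrow> d' \<in> D \<Longrightarrow> slope d = slope d' \<Longrightarrow> det2 d d' = 0"
    using obtain_shear[where v = v, OF assms(1,3)] by blast
  have "inj_on slope D"
  proof (rule inj_onI)
    fix d d' assume "d \<in> D" "d' \<in> D" "slope d = slope d'"
    then show "d = d'" using slope assms(4) by (meson)
  qed
  then have card: "card (slope ` D) = Suc k" using assms(2) by (simp add: card_image)
  show ?thesis
  proof (rule that)
    fix j assume "j \<le> k"
    then obtain c where c: "\<And>X Y. X ^ j * Y ^ (k - j) = (\<Sum>l\<in>slope ` D. c l * (Y + l * X) ^ k)"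
      using binary_monomial_in_span_of_powers[OF finite_imageI[OF assms(1)] card] by blast
    have "shear_x t v p ^ j * shear_y v p ^ (k - j)
        = (\<Sum>d\<in>D. c (slope d) / A d ^ k * det2 d (p - v) ^ k)" for p
      unfolding c sum.reindex[OF \<open>inj_on slope D\<close>] using A
      by (auto simp: det2_eq power_mult_distrib intro!: sum.cong)
    then show "\<exists>c. \<forall>p. shear_x t v p ^ j * shear_y v p ^ (k - j) = (\<Sum>d\<in>D. c d * det2 d (p - v) ^ k)"
      by (intro exI[of _ "\<lambda>d. c (slope d) / A d ^ k"]) simp
  qed
qed

section \<open>Edges of the triangulation\<close>

lemma finite_int_edges:
  assumes "planar_triangulation T"
  shows "finite (int_edges T)"
proof -
  have "int_edges T \<subseteq> (\<Union>\<sigma>\<in>T. Pow \<sigma>)" unfolding int_edges_def edges_def by auto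
  moreover have "finite (\<Union>\<sigma>\<in>T. Pow \<sigma>)"
    using assms unfolding planar_triangulation_def by auto
  ultimately show ?thesis by (rule finite_subset)
qed

lemma planar_triangulation_face:
  assumes "planar_triangulation T" and "\<sigma> \<in> T"
  obtains a b c where "\<sigma> = {a, b, c}" and "det2 (b - a) (c - a) \<noteq> 0"
    and "a \<noteq> b" and "a \<noteq> c" and "b \<noteq> c"
proof -
  have "\<forall>\<sigma>\<in>T. \<exists>a b c. \<sigma> = {a, b, c} \<and> det2 (b - a) (c - a) \<noteq> 0"
    using assms(1) unfolding planar_triangulation_def by (elim conjE)
  then obtain a b c where "\<sigma> = {a, b, c}" and nd: "det2 (b - a) (c - a) \<noteq> 0"
    using assms(2) by blast
  moreover have "a \<noteq> b" "a \<noteq> c" "b \<noteq> c"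
    using nd by (auto simp: det2_def)
  ultimately show ?thesis by (rule that)
qed

lemma obtain_other_vertices:
  assumes "g \<in> {a, b, c}" and "a \<noteq> b" and "a \<noteq> c" and "b \<noteq> c"
  obtains w1 w2 where "{a, b, c} = {g, w1, w2}" and "g \<noteq> w1" and "g \<noteq> w2" and "w1 \<noteq> w2"
proof -
  consider "g = a" | "g = b" | "g = c" using assms(1) by blast
  then show ?thesis
  proof cases
    case 1
    then show ?thesis using assms by (intro that[of b c]) auto
  next
    case 2
    then show ?thesis using assms by (intro that[of a c]) (auto simp: insert_commute)
  next
    case 3
    then show ?thesis using assms by (intro that[of a b]) (auto simp: insert_commute)
  qed
qed

lemma int_edgesI_int_vert:
  assumes "e \<in> edges T" and "v \<in> e" and "v \<in> int_verts T"
  shows "e \<in> int_edges T"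
  using assms hull_inc[OF assms(2), of convex] unfolding int_edges_def int_verts_def by blast

lemma int_edges_at_face_vertex:
  assumes "\<sigma> \<in> T" and "\<sigma> = {u, w1, w2}" and "u \<noteq> w1" and "u \<noteq> w2" and "u \<in> int_verts T"
  shows "{e \<in> int_edges T. u \<in> e \<and> e \<subseteq> \<sigma>} = {{u, w1}, {u, w2}}"
proof
  show "{e \<in> int_edges T. u \<in> e \<and> e \<subseteq> \<sigma>} \<subseteq> {{u, w1}, {u, w2}}"
  proof
    fix e assume e: "e \<in> {e \<in> int_edges T. u \<in> e \<and> e \<subseteq> \<sigma>}"
    then obtain x y where "e = {x, y}" "x \<noteq> y"
      unfolding int_edges_def edges_def by (auto simp: card_2_iff)
    with e assms(2) show "e \<in> {{u, w1}, {u, w2}}" by auto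
  qed
  have "{u, w1} \<in> edges T" "{u, w2} \<in> edges T"
    using assms(1-4) unfolding edges_def by auto
  then show "{{u, w1}, {u, w2}} \<subseteq> {e \<in> int_edges T. u \<in> e \<and> e \<subseteq> \<sigma>}"
    using int_edgesI_int_vert[OF _ _ assms(5)] assms(2) by auto
qed

lemma obtain_edge_directions:
  assumes "Suc k \<le> card (slopes T v)"
  obtains D where "finite D" and "card D = Suc k" and "0 \<notin> D"
    and "\<And>d d'. d \<in> D \<Longrightarrow> d' \<in> D \<Longrightarrow> d \<noteq> d' \<Longrightarrow> det2 d d' \<noteq> 0"
    and "\<And>d. d \<in> D \<Longrightarrow> {v, v + d} \<in> edges T"
proof -
  define N where "N = {w. w \<noteq> v \<and> {v, w} \<in> edges T}"
  define dir where "dir w = span {w - v}" for w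
  obtain S where S: "S \<subseteq> slopes T v" "card S = Suc k" "finite S"
    using obtain_subset_with_card_n[OF assms] by blast
  moreover have "slopes T v = dir ` N" unfolding slopes_def N_def dir_def ..
  ultimately obtain U where U: "U \<subseteq> N" "inj_on dir U" "S = dir ` U"
    using subset_image_inj by metis
  have "finite U" "card U = Suc k"
    using S U finite_image_iff card_image by metis+
  have "det2 (w - v) (w' - v) \<noteq> 0" if "w \<in> U" "w' \<in> U" "w \<noteq> w'" for w w'
  proof
    assume "det2 (w - v) (w' - v) = 0"
    moreover have "w - v \<noteq> 0" "w' - v \<noteq> 0" using that U(1) by (auto simp: N_def)
    ultimately have "dir w = dir w'" unfolding dir_def by (intro span_eq_if_det2_eq_0)
    with that U(2) show False by (auto dest: inj_onD)
  qed
  note pairwise = this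
  have inj: "inj_on (\<lambda>w. w - v) U" by (simp add: inj_on_def)
  show ?thesis
  proof (rule that[of "(\<lambda>w. w - v) ` U"])
    show "finite ((\<lambda>w. w - v) ` U)" using \<open>finite U\<close> by simp
    show "card ((\<lambda>w. w - v) ` U) = Suc k" using card_image[OF inj] \<open>card U = Suc k\<close> by simp
    show "0 \<notin> (\<lambda>w. w - v) ` U" using U(1) by (auto simp: N_def)
    show "{v, v + d} \<in> edges T" if "d \<in> (\<lambda>w. w - v) ` U" for d
      using that U(1) by (auto simp: N_def)
    show "det2 d d' \<noteq> 0" if "d \<in> (\<lambda>w. w - v) ` U" "d' \<in> (\<lambda>w. w - v) ` U" "d \<noteq> d'" for d d'
    proof -
      from that(1,2) obtain w w' where "w \<in> U" "w' \<in> U" "d = w - v" "d' = w' - v" by blast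
      with that(3) pairwise show ?thesis by blast
    qed
  qed
qed

lemma lexless_asym: "lexless p q \<Longrightarrow> \<not> lexless q p"
  unfolding lexless_def by auto

lemma ehead_etail_doubleton:
  assumes "lexless p q"
  shows "ehead {p, q} = q" and "etail {p, q} = p"
  using assms lexless_asym[OF assms] unfolding ehead_def etail_def
  by (auto intro!: the_equality)

lemma orientation_doubleton:
  assumes "p \<noteq> q"
  shows "ehead {p, q} = q \<and> etail {p, q} = p \<or> ehead {p, q} = p \<and> etail {p, q} = q"
proof -
  have "lexless p q \<or> lexless q p" using assms unfolding lexless_def by (auto simp: prod_eq_iff)
  then show ?thesis using ehead_etail_doubleton[of p q] ehead_etail_doubleton[of q p]
    by (auto simp: insert_commute)
qed

lemma det2_edge_eq_lform:
  assumes "p \<noteq> q"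
  obtains s where "\<And>x. det2 (q - p) (x - p) = s * lform {p, q} x"
  using orientation_doubleton[OF assms]
proof
  assume "ehead {p, q} = q \<and> etail {p, q} = p"
  then show ?thesis by (intro that[of 1]) (simp add: lform_def)
next
  assume "ehead {p, q} = p \<and> etail {p, q} = q"
  then show ?thesis by (intro that[of "-1"]) (simp add: lform_def det2_def algebra_simps)
qed

section \<open>The edge and vertex ideals\<close>

lemma multiples_polys: "h \<in> multiples m f \<Longrightarrow> h \<in> polys m"
  unfolding multiples_def by blast

lemma multiples_zero: "(\<lambda>p. 0) \<in> multiples m f"
  unfolding multiples_def is_poly_def
  by (auto intro!: polys_const exI[of _ "\<lambda>p. 0"] exI[of _ 0])

lemma multiples_add:
  assumes "h \<in> multiples m f" and "h' \<in> multiples m f"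
  shows "(\<lambda>p. h p + h' p) \<in> multiples m f"
proof -
  obtain g g' where "is_poly g" "h = (\<lambda>p. f p * g p)" "is_poly g'" "h' = (\<lambda>p. f p * g' p)"
    using assms unfolding multiples_def by blast
  then show ?thesis
    using assms unfolding multiples_def
    by (auto intro!: polys_add is_poly_add exI[of _ "\<lambda>p. g p + g' p"] simp: distrib_left)
qed

lemma multiples_scale:
  assumes "h \<in> multiples m f"
  shows "(\<lambda>p. c * h p) \<in> multiples m f"
proof -
  obtain g where "is_poly g" "h = (\<lambda>p. f p * g p)"
    using assms unfolding multiples_def by blast
  then show ?thesis
    using assms unfolding multiples_def
    by (auto intro!: polys_scale is_poly_scale exI[of _ "\<lambda>p. c * g p"] simp: ac_simps)
qed

lemma Jedge_polys: "q \<in> Jedge m rr e \<Longrightarrow> q \<in> polys m"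
  unfolding Jedge_def by (rule multiples_polys)

lemma Jedge_minus_one: "rr e = -1 \<Longrightarrow> Jedge m rr e = polys m"
  unfolding Jedge_def multiples_def is_poly_def by auto

lemma Jvert_zero: "(\<lambda>p. 0) \<in> Jvert T m rr v"
  unfolding Jvert_def Jedge_def by (auto intro!: exI[of _ "\<lambda>e p. 0"] multiples_zero)

lemma Jvert_add:
  assumes "f \<in> Jvert T m rr v" and "f' \<in> Jvert T m rr v"
  shows "(\<lambda>p. f p + f' p) \<in> Jvert T m rr v"
proof -
  obtain h h' where "\<forall>e\<in>int_edges T. v \<in> e \<longrightarrow> h e \<in> Jedge m rr e \<and> h' e \<in> Jedge m rr e"
    and "f = (\<lambda>p. \<Sum>e | e \<in> int_edges T \<and> v \<in> e. h e p)"
    and "f' = (\<lambda>p. \<Sum>e | e \<in> int_edges T \<and> v \<in> e. h' e p)"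
    using assms unfolding Jvert_def by auto
  then show ?thesis
    unfolding Jvert_def Jedge_def
    by (auto intro!: exI[of _ "\<lambda>e p. h e p + h' e p"] multiples_add simp: sum.distrib)
qed

lemma Jvert_scale:
  assumes "f \<in> Jvert T m rr v"
  shows "(\<lambda>p. c * f p) \<in> Jvert T m rr v"
proof -
  obtain h where "\<forall>e\<in>int_edges T. v \<in> e \<longrightarrow> h e \<in> Jedge m rr e"
    and "f = (\<lambda>p. \<Sum>e | e \<in> int_edges T \<and> v \<in> e. h e p)"
    using assms unfolding Jvert_def by auto
  then show ?thesis
    unfolding Jvert_def Jedge_def
    by (auto intro!: exI[of _ "\<lambda>e p. c * h e p"] multiples_scale simp: sum_distrib_left)
qed

lemma Jvert_sum: "(\<And>i. i \<in> A \<Longrightarrow> F i \<in> Jvert T m rr v) \<Longrightarrow> (\<lambda>p. \<Sum>i\<in>A. F i p) \<in> Jvert T m rr v"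
  by (induction A rule: infinite_finite_induct) (auto intro: Jvert_zero Jvert_add)

lemma Jvert_if_Jedge:
  assumes "finite (int_edges T)" and "e \<in> int_edges T" and "v \<in> e" and "q \<in> Jedge m rr e"
  shows "q \<in> Jvert T m rr v"
proof -
  have "q = (\<lambda>p. \<Sum>e' | e' \<in> int_edges T \<and> v \<in> e'. if e' = e then q p else 0)"
    using assms(1-3) by (simp add: sum.delta')
  moreover have "(\<lambda>p. if e' = e then q p else 0) \<in> Jedge m rr e'" for e'
    using assms(4) multiples_zero unfolding Jedge_def by (cases "e' = e") auto
  ultimately show ?thesis
    unfolding Jvert_def by (intro CollectI exI[of _ "\<lambda>e' p. if e' = e then q p else 0"]) auto
qed

lemma Jvert_mono:
  assumes "\<And>e. Jedge m rr e \<subseteq> Jedge m ss e"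
  shows "Jvert T m rr g \<subseteq> Jvert T m ss g"
  unfolding Jvert_def using assms by blast

lemma edge_form_power_mult_in_Jvert:
  assumes "finite (int_edges T)" and "v \<in> int_verts T" and "{v, w} \<in> edges T" and "v \<noteq> w"
    and "int k = r + 1" and "k \<le> m" and "G \<in> polys (m - k)"
  shows "(\<lambda>p. det2 (w - v) (p - v) ^ k * G p) \<in> Jvert T m (\<lambda>e. r) v"
proof -
  obtain s where s: "\<And>x. det2 (w - v) (x - v) = s * lform {v, w} x"
    using det2_edge_eq_lform[OF assms(4)] by blast
  have "(\<lambda>p. det2 (w - v) (p - v) ^ k * G p) \<in> polys (m - k + k)"
    by (rule polys_mult_affine_power[OF affine_form_det2_dir assms(7)])
  moreover have "(\<lambda>p. det2 (w - v) (p - v) ^ k * G p)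
      = (\<lambda>p. lform {v, w} p ^ nat (r + 1) * (s ^ k * G p))"
  proof -
    have "nat (r + 1) = k" using assms(5) by simp
    then show ?thesis unfolding s by (simp add: power_mult_distrib ac_simps)
  qed
  moreover have "is_poly (\<lambda>p. s ^ k * G p)"
    unfolding is_poly_def using polys_scale[OF assms(7)] by blast
  ultimately have "(\<lambda>p. det2 (w - v) (p - v) ^ k * G p) \<in> Jedge m (\<lambda>e. r) {v, w}"
    unfolding Jedge_def multiples_def using assms(6) by auto
  moreover have "{v, w} \<in> int_edges T" by (rule int_edgesI_int_vert[OF assms(3) _ assms(2)]) simp
  ultimately show ?thesis by (intro Jvert_if_Jedge[OF assms(1)]) simp_all
qed

lemma vanishes_to_order_in_Jvert:
  assumes "finite (int_edges T)" and "v \<in> int_verts T" and "Suc k \<le> card (slopes T v)"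
    and "int k = r + 1" and "k \<le> m" and "vanishes_to_order v k m f"
  shows "f \<in> Jvert T m (\<lambda>e. r) v"
proof -
  obtain D where D: "finite D" "card D = Suc k" "0 \<notin> D"
    "\<And>d d'. d \<in> D \<Longrightarrow> d' \<in> D \<Longrightarrow> d \<noteq> d' \<Longrightarrow> det2 d d' \<noteq> 0"
    and edge: "\<And>d. d \<in> D \<Longrightarrow> {v, v + d} \<in> edges T"
    using obtain_edge_directions[OF assms(3)] by blast
  obtain t where t: "\<And>j. j \<le> k \<Longrightarrow>
      \<exists>c. \<forall>p. shear_x t v p ^ j * shear_y v p ^ (k - j) = (\<Sum>d\<in>D. c d * det2 d (p - v) ^ k)"
    using sheared_monomial_in_span_of_powers[OF D] by blast
  obtain g where g: "\<forall>j\<le>k. g j \<in> polys (m - k)"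
    and f: "f = (\<lambda>p. \<Sum>j\<le>k. shear_x t v p ^ j * shear_y v p ^ (k - j) * g j p)"
    using vanishes_to_order_sheared_expansion[OF assms(6,5)] unfolding has_sheared_expansion_def
    by blast
  have "(\<lambda>p. shear_x t v p ^ j * shear_y v p ^ (k - j) * g j p) \<in> Jvert T m (\<lambda>e. r) v"
    if j: "j \<le> k" for j
  proof -
    obtain c where c: "\<And>p. shear_x t v p ^ j * shear_y v p ^ (k - j) = (\<Sum>d\<in>D. c d * det2 d (p - v) ^ k)"
      using t[OF j] by blast
    have "(\<lambda>p. \<Sum>d\<in>D. c d * (det2 (v + d - v) (p - v) ^ k * g j p)) \<in> Jvert T m (\<lambda>e. r) v"
    proof (intro Jvert_sum Jvert_scale edge_form_power_mult_in_Jvert[OF assms(1,2) _ _ assms(4,5)])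
      fix d assume "d \<in> D"
      then show "{v, v + d} \<in> edges T" "v \<noteq> v + d" using edge D(3) by auto
      show "g j \<in> polys (m - k)" using g j by blast
    qed
    then show ?thesis unfolding c by (simp add: sum_distrib_right mult.assoc)
  qed
  then show ?thesis unfolding f by (intro Jvert_sum) simp
qed

section \<open>Clearing the smoothness across the edges of a face\<close>

lemma Jedge_clear_face_mono: "Jedge m (\<lambda>e. r) e \<subseteq> Jedge m (\<lambda>e. if e \<subseteq> \<sigma> then -1 else r) e"
proof (cases "e \<subseteq> \<sigma>")
  case True
  then show ?thesis by (auto simp: Jedge_minus_one dest: Jedge_polys)
next
  case False
  then show ?thesis by (simp add: Jedge_def)
qed

lemma Jvert_clear_face_outside:
  assumes "g \<notin> \<sigma>"
  shows "Jvert T m (\<lambda>e. if e \<subseteq> \<sigma> then -1 else r) g = Jvert T m (\<lambda>e. r) g"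
proof -
  have "Jedge m (\<lambda>e. if e \<subseteq> \<sigma> then -1 else r) e = Jedge m (\<lambda>e. r) e" if "g \<in> e" for e
    using that assms unfolding Jedge_def by auto
  then show ?thesis unfolding Jvert_def by (intro Collect_cong) (metis (no_types, lifting))
qed

lemma H0_vanishes_mono:
  assumes "H0_vanishes T m rr" and "\<And>g. Jvert T m rr g \<subseteq> Jvert T m ss g"
  shows "H0_vanishes T m ss"
  unfolding H0_vanishes_def
proof (intro allI impI)
  fix G assume "\<forall>g\<in>int_verts T. G g \<in> polys m"
  then obtain F J where "\<forall>e\<in>int_edges T. F e \<in> polys m" "\<forall>g\<in>int_verts T. J g \<in> Jvert T m rr g"
    "\<forall>g\<in>int_verts T. \<forall>p. G g p = d1 T F g p + J g p"
    using assms(1) unfolding H0_vanishes_def by blast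
  then show "\<exists>F J. (\<forall>e\<in>int_edges T. F e \<in> polys m) \<and> (\<forall>g\<in>int_verts T. J g \<in> Jvert T m ss g) \<and>
      (\<forall>g\<in>int_verts T. \<forall>p. G g p = d1 T F g p + J g p)"
    using assms(2) by blast
qed

lemma H1_vanishes_clear_face_if_correctable:
  assumes H1: "H1_vanishes T m (\<lambda>e. r)"
    and correct: "\<And>F. \<forall>e\<in>int_edges T. F e \<in> polys m \<Longrightarrow>
        \<forall>g\<in>int_verts T. d1 T F g \<in> Jvert T m (\<lambda>e. if e \<subseteq> \<sigma> then -1 else r) g \<Longrightarrow>
        \<exists>f. (\<forall>e. f e \<in> polys m) \<and> (\<forall>g\<in>int_verts T.
          d1 T (\<lambda>e p. F e p - (if e \<subseteq> \<sigma> then f e p else 0)) g \<in> Jvert T m (\<lambda>e. r) g)"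
  shows "H1_vanishes T m (\<lambda>e. if e \<subseteq> \<sigma> then -1 else r)"
  unfolding H1_vanishes_def
proof (intro allI impI)
  let ?s = "\<lambda>e. if e \<subseteq> \<sigma> then -1 else r"
  fix F assume F: "(\<forall>e\<in>int_edges T. F e \<in> polys m) \<and> (\<forall>g\<in>int_verts T. d1 T F g \<in> Jvert T m ?s g)"
  then obtain f where f: "\<forall>e. f e \<in> polys m" and cycle: "\<forall>g\<in>int_verts T.
      d1 T (\<lambda>e p. F e p - (if e \<subseteq> \<sigma> then f e p else 0)) g \<in> Jvert T m (\<lambda>e. r) g"
    using correct by blast
  define F' where "F' = (\<lambda>e p. F e p - (if e \<subseteq> \<sigma> then f e p else 0))"
  have "F' e \<in> polys m" if "e \<in> int_edges T" for e
    using F f that polys_const[of 0] unfolding F'_def by (cases "e \<subseteq> \<sigma>") (auto intro: polys_diff)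
  moreover have "\<forall>g\<in>int_verts T. d1 T F' g \<in> Jvert T m (\<lambda>e. r) g" using cycle by (simp only: F'_def)
  ultimately obtain B K where B: "\<forall>s\<in>T. B s \<in> polys m" and K: "\<forall>e\<in>int_edges T. K e \<in> Jedge m (\<lambda>e. r) e"
    and eq: "\<forall>e\<in>int_edges T. \<forall>p. F' e p = d2 T B e p + K e p"
    using H1 unfolding H1_vanishes_def by blast
  define K' where "K' e p = K e p + (if e \<subseteq> \<sigma> then f e p else 0)" for e p
  have "K' e \<in> Jedge m ?s e" if "e \<in> int_edges T" for e
  proof (cases "e \<subseteq> \<sigma>")
    case True
    then have "K' e = (\<lambda>p. K e p + f e p)" by (simp add: K'_def fun_eq_iff)
    moreover have "K e \<in> polys m" using K that by (blast dest: Jedge_polys)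
    ultimately show ?thesis using True f by (simp add: Jedge_minus_one polys_add)
  next
    case False
    then have "K' e = K e" by (simp add: K'_def fun_eq_iff)
    then show ?thesis using K that False by (simp add: Jedge_def)
  qed
  moreover have "\<forall>e\<in>int_edges T. \<forall>p. F e p = d2 T B e p + K' e p"
    using eq by (simp add: F'_def K'_def algebra_simps)
  ultimately show "\<exists>B K. (\<forall>s\<in>T. B s \<in> polys m) \<and> (\<forall>e\<in>int_edges T. K e \<in> Jedge m ?s e) \<and>
      (\<forall>e\<in>int_edges T. \<forall>p. F e p = d2 T B e p + K e p)"
    using B by blast
qed

lemma d1_polys: "\<forall>e\<in>int_edges T. F e \<in> polys m \<Longrightarrow> d1 T F u \<in> polys m"
  unfolding d1_def by (auto intro!: polys_sum polys_scale)

lemma d1_subtract_on_face: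
  assumes "finite (int_edges T)"
  shows "d1 T (\<lambda>e p. F e p - (if e \<subseteq> \<sigma> then f e p else 0)) u p
    = d1 T F u p - (\<Sum>e | e \<in> int_edges T \<and> u \<in> e \<and> e \<subseteq> \<sigma>. vsign u e * f e p)"
proof -
  have "finite {e \<in> int_edges T. u \<in> e}" using assms by simp
  then have "(\<Sum>e | e \<in> int_edges T \<and> u \<in> e. if e \<subseteq> \<sigma> then vsign u e * f e p else 0)
      = (\<Sum>e\<in>{e \<in> {e \<in> int_edges T. u \<in> e}. e \<subseteq> \<sigma>}. vsign u e * f e p)"
    by (rule sum.inter_filter[symmetric])
  also have "{e \<in> {e \<in> int_edges T. u \<in> e}. e \<subseteq> \<sigma>} = {e. e \<in> int_edges T \<and> u \<in> e \<and> e \<subseteq> \<sigma>}"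
    by auto
  finally show ?thesis
    unfolding d1_def by (simp add: right_diff_distrib sum_subtractf if_distrib[of "(*) _"] cong: if_cong)
qed

lemma d1_subtract_outside_face:
  assumes "finite (int_edges T)" and "g \<notin> \<sigma>"
  shows "d1 T (\<lambda>e p. F e p - (if e \<subseteq> \<sigma> then f e p else 0)) g = d1 T F g"
proof
  fix p
  have "{e. e \<in> int_edges T \<and> g \<in> e \<and> e \<subseteq> \<sigma>} = {}" using assms(2) by blast
  then show "d1 T (\<lambda>e p. F e p - (if e \<subseteq> \<sigma> then f e p else 0)) g p = d1 T F g p"
    by (simp only: d1_subtract_on_face[OF assms(1)] sum.empty diff_zero)
qed

text \<open>\<open>P x w\<close> is the part of the defect at the vertex \<open>x\<close> of \<open>\<sigma>\<close> that vanishes to high order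
  at \<open>w\<close>. Subtracting the correction turns the defect \<open>\<Sum>w. P u w\<close> at each vertex \<open>u\<close> of \<open>\<sigma>\<close>
  into \<open>\<Sum>w. P w u\<close> (\<open>d1_face_correction\<close>).\<close>
definition face_correction :: "pt set \<Rightarrow> (pt \<Rightarrow> pt \<Rightarrow> pt \<Rightarrow> real) \<Rightarrow> pt set \<Rightarrow> pt \<Rightarrow> real" where
  "face_correction \<sigma> P e p = (let x = ehead e; y = etail e; z = (THE z. z \<in> \<sigma> - e)
     in P x z p + P z y p - P y z p - P z x p)"

lemma vsign_face_correction:
  assumes "\<sigma> = {u, w, z}" and "u \<noteq> w" and "u \<noteq> z" and "w \<noteq> z"
  shows "vsign u {u, w} * face_correction \<sigma> P {u, w} p = P u z p + P z w p - P w z p - P z u p"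
proof -
  have "(THE z'. z' \<in> \<sigma> - {u, w}) = z" using assms by (intro the_equality) auto
  then show ?thesis
    using orientation_doubleton[OF assms(2)] assms(2)
    unfolding face_correction_def vsign_def Let_def by auto
qed

lemma d1_face_correction:
  assumes "finite (int_edges T)" and "\<sigma> \<in> T" and "\<sigma> = {a, b, c}"
    and "a \<noteq> b" and "a \<noteq> c" and "b \<noteq> c" and "u \<in> \<sigma>" and "u \<in> int_verts T"
    and "d1 T F u = (\<lambda>p. \<Sum>w\<in>\<sigma>. P u w p)"
  shows "d1 T (\<lambda>e p. F e p - (if e \<subseteq> \<sigma> then face_correction \<sigma> P e p else 0)) u
    = (\<lambda>p. \<Sum>w\<in>\<sigma>. P w u p)"
proof
  fix p
  obtain w1 w2 where "{a, b, c} = {u, w1, w2}" and w: "u \<noteq> w1" "u \<noteq> w2" "w1 \<noteq> w2"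
    using assms(7) unfolding assms(3) by (rule obtain_other_vertices[OF _ assms(4-6)])
  with assms(3) have \<sigma>: "\<sigma> = {u, w1, w2}" by simp
  have "{u, w1} \<noteq> {u, w2}" using w by (auto simp: doubleton_eq_iff)
  moreover have "\<sigma> = {u, w2, w1}" using \<sigma> by auto
  ultimately show "d1 T (\<lambda>e p. F e p - (if e \<subseteq> \<sigma> then face_correction \<sigma> P e p else 0)) u p
      = (\<Sum>w\<in>\<sigma>. P w u p)"
    using \<sigma> w assms(1,2,8,9) vsign_face_correction[of \<sigma> u w1 w2 P p]
      vsign_face_correction[of \<sigma> u w2 w1 P p]
    by (simp add: d1_subtract_on_face int_edges_at_face_vertex)
qed

lemma H1_vanishes_clear_face:
  assumes pt: "planar_triangulation T" and "\<sigma> \<in> T" and H1: "H1_vanishes T m (\<lambda>e. r)"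
    and slopes: "\<forall>g\<in>int_verts T. Suc k \<le> card (slopes T g)"
    and k: "int k = r + 1" and km: "3 * k \<le> 2 * m + 2"
  shows "H1_vanishes T m (\<lambda>e. if e \<subseteq> \<sigma> then -1 else r)"
proof (rule H1_vanishes_clear_face_if_correctable[OF H1])
  fix F assume F: "\<forall>e\<in>int_edges T. F e \<in> polys m"
    and cycle: "\<forall>g\<in>int_verts T. d1 T F g \<in> Jvert T m (\<lambda>e. if e \<subseteq> \<sigma> then -1 else r) g"
  have fin: "finite (int_edges T)" by (rule finite_int_edges[OF pt])
  obtain a b c where \<sigma>: "\<sigma> = {a, b, c}" and nd: "det2 (b - a) (c - a) \<noteq> 0"
    and abc: "a \<noteq> b" "a \<noteq> c" "b \<noteq> c"
    using planar_triangulation_face[OF pt \<open>\<sigma> \<in> T\<close>] by blast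
  obtain P where P: "\<And>u w. P u w \<in> polys m" "\<And>u w. w \<in> \<sigma> \<Longrightarrow> vanishes_to_order w k m (P u w)"
    "\<And>u. d1 T F u = (\<lambda>p. \<Sum>w\<in>\<sigma>. P u w p)"
    by (rule polys_split_over_face[where G = "d1 T F", OF \<sigma> nd abc km d1_polys[OF F]]) blast
  show "\<exists>f. (\<forall>e. f e \<in> polys m) \<and> (\<forall>g\<in>int_verts T.
      d1 T (\<lambda>e p. F e p - (if e \<subseteq> \<sigma> then f e p else 0)) g \<in> Jvert T m (\<lambda>e. r) g)"
  proof (intro exI conjI allI ballI)
    show "face_correction \<sigma> P e \<in> polys m" for e
      unfolding face_correction_def[abs_def] Let_def by (intro polys_diff polys_add P(1))
    fix g assume g: "g \<in> int_verts T"
    show "d1 T (\<lambda>e p. F e p - (if e \<subseteq> \<sigma> then face_correction \<sigma> P e p else 0)) g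
        \<in> Jvert T m (\<lambda>e. r) g"
    proof (cases "g \<in> \<sigma>")
      case True
      have "vanishes_to_order g k m (\<lambda>p. \<Sum>w\<in>\<sigma>. P w g p)"
        using P(2)[OF True] by (rule vanishes_to_order_sum)
      moreover have "k \<le> m" using km by linarith
      ultimately have "(\<lambda>p. \<Sum>w\<in>\<sigma>. P w g p) \<in> Jvert T m (\<lambda>e. r) g"
        using vanishes_to_order_in_Jvert[OF fin g _ k] slopes g by blast
      then show ?thesis
        using d1_face_correction[where P = P, OF fin \<open>\<sigma> \<in> T\<close> \<sigma> abc True g P(3)] by simp
    next
      case False
      have "d1 T F g \<in> Jvert T m (\<lambda>e. if e \<subseteq> \<sigma> then -1 else r) g" using cycle g by blast
      with False show ?thesis by (simp add: d1_subtract_outside_face[OF fin] Jvert_clear_face_outside)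
    qed
  qed
qed

theorem mainTheorem6:
  fixes T :: "pt set set" and m :: nat and r :: int and \<sigma> :: "pt set"
  assumes "planar_triangulation T"
    and "r \<ge> -1"
    and "lower_acyclic T m (\<lambda>e. r)"
    and "\<forall>g\<in>int_verts T. int (card (slopes T g)) \<ge> r + 2"
    and "real m > 3 * real_of_int r / 2"
    and "\<sigma> \<in> T"
  shows "lower_acyclic T m (\<lambda>e. if e \<subseteq> \<sigma> then -1 else r)"
proof -
  define k where "k = nat (r + 1)"
  have k: "int k = r + 1" using assms(2) by (simp add: k_def)
  have slopes: "\<forall>g\<in>int_verts T. Suc k \<le> card (slopes T g)"
  proof
    fix g assume "g \<in> int_verts T"
    then have "r + 2 \<le> int (card (slopes T g))" using assms(4) by blast
    then show "Suc k \<le> card (slopes T g)" using k by linarith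
  qed
  have "real_of_int (3 * r) < real_of_int (2 * int m)" using assms(5) by simp
  then have "3 * k \<le> 2 * m + 2" using k by linarith
  then have "H1_vanishes T m (\<lambda>e. if e \<subseteq> \<sigma> then -1 else r)"
    using H1_vanishes_clear_face[OF assms(1,6) _ slopes k] assms(3) unfolding lower_acyclic_def by blast
  moreover have "H0_vanishes T m (\<lambda>e. if e \<subseteq> \<sigma> then -1 else r)"
    using assms(3) H0_vanishes_mono[OF _ Jvert_mono[OF Jedge_clear_face_mono]]
    unfolding lower_acyclic_def by blast
  ultimately show ?thesis unfolding lower_acyclic_def ..
qed

end
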